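(* Let $A$ and $I$ be finite sets. In the group $\langle\mathcal P^\times(I)\rangle^{\otimes A}$ one has $$\bigotimes_{a\in A}\sum_{J\in\mathcal P^\times(I)}(-1)^{|I|-1-|J|}\langle J\rangle-\sum_{J\in\mathcal P^\times(I)}(-1)^{|I|-1-|J|}\bigotimes_{a\in A}\langle J\rangle=\sum_{k\in\mathcal R'(A,I)}\ \bigotimes_{a\in A}\ \sum_{J\in\mathcal P(k(a))}(-1)^{|k(a)|-|J|}\langle J\rangle.$$
   Context: $\mathcal P(I)$ is the set of subsets of $I$ and $\mathcal P^\times(I)=\mathcal P(I)\setminus\{I\}$; $\langle\mathcal P^\times(I)\rangle$ is the free abelian group with basis $\{\langle J\rangle: J\in\mathcal P^\times(I)\}$, and $\langle\mathcal P^\times(I)\rangle^{\otimes A}$ is the tensor product over $\mathbb Z$ of copies indexed by $A$. $\mathcal R'(A,I)$ is the set of functions $k\colon A\to\mathcal P^\times(I)$ with $\bigcup_{a\in A}k(a)=I$. *)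

theory Defs
  imports Main "HOL-Library.FuncSet" "HOL-Library.Function_Algebras"
begin

definition Ptimes :: "'i set \<Rightarrow> 'i set set" where
  "Ptimes I = Pow I - {I}"

(* Elements of the free abelian group <P^x(I)> are represented by their
   integer coefficient functions 'i set => int (supported on P^x(I));
   the basis element <J> is the indicator of J. *)
definition gen :: "'i set \<Rightarrow> ('i set \<Rightarrow> int)" where
  "gen J = (\<lambda>X. if X = J then 1 else 0)"

definition smult :: "int \<Rightarrow> ('b \<Rightarrow> int) \<Rightarrow> ('b \<Rightarrow> int)" where
  "smult c f = (\<lambda>x. c * f x)"

(* <P^x(I)>^{\<otimes>A} is free abelian with basis the pure tensors
   \<otimes>_a <k(a)>, k : A -> P^x(I).  Elements are represented by coefficient
   functions on (extensional) maps k \<in> A \<rightarrow>\<^sub>E P^x(I).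
   tensor A I v is the (multilinear) pure tensor \<otimes>_{a\<in>A} v(a). *)
definition tensor :: "'a set \<Rightarrow> 'i set \<Rightarrow> ('a \<Rightarrow> 'i set \<Rightarrow> int) \<Rightarrow> (('a \<Rightarrow> 'i set) \<Rightarrow> int)" where
  "tensor A I v = (\<lambda>k. if k \<in> A \<rightarrow>\<^sub>E Ptimes I then (\<Prod>a\<in>A. v a (k a)) else 0)"

definition Rprime :: "'a set \<Rightarrow> 'i set \<Rightarrow> ('a \<Rightarrow> 'i set) set" where
  "Rprime A I = {k \<in> A \<rightarrow>\<^sub>E Ptimes I. (\<Union>a\<in>A. k a) = I}"

end

theory Submission
  imports Defs
begin

(* Write e_K = \<Sum>_{J \<subseteq> K} (-1)^(|K|-|J|) <J> (mobius_gen K). Moebius inversion on the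
   subset lattice gives <J> = \<Sum>_{K \<subseteq> J} e_K, and hence also
   \<Sum>_{J \<subset> I} (-1)^(|I|-1-|J|) <J> = \<Sum>_{K \<subset> I} e_K. Expanding both tensor products
   multilinearly, the first term becomes the sum of \<otimes>_a e_{k(a)} over all k : A \<rightarrow> P^x(I),
   while the second is the same sum with k weighted by \<Sum>_{\<Union>k \<subseteq> J \<subset> I} (-1)^(|I|-1-|J|),
   which is 0 if \<Union>k = I and 1 otherwise. The difference is the sum over R'(A,I). *)

lemma sum_neg_one_power_card_between:
  assumes "finite S"
  shows "(\<Sum>T | U \<subseteq> T \<and> T \<subseteq> S. (-1::'b::ring_1) ^ card T) = (if U = S then (-1) ^ card S else 0)"
proof (cases "U \<subset> S")
  case True
  have "finite {T. U \<subseteq> T \<and> T \<subseteq> S}"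
    using assms by (auto intro: finite_subset[of _ "Pow S"])
  moreover have "card {T \<in> {T. U \<subseteq> T \<and> T \<subseteq> S}. even (card T)}
      = card {T \<in> {T. U \<subseteq> T \<and> T \<subseteq> S}. odd (card T)}"
    using card_subsupersets_even_odd[OF assms True] by (simp add: conj_ac)
  ultimately show ?thesis
    using True by (simp add: sum_alternating_cancels)
next
  case False
  then have "{T. U \<subseteq> T \<and> T \<subseteq> S} = (if U = S then {S} else {})"
    by auto
  then show ?thesis
    by simp
qed

lemma sum_neg_one_power_card_minus_lower:
  assumes "finite S"
  shows "(\<Sum>T | U \<subseteq> T \<and> T \<subseteq> S. (-1::'b::ring_1) ^ (card T - card U)) = (if U = S then 1 else 0)"
proof -
  have "(-1::'b) ^ (card T - card U) = (-1) ^ card T * (-1) ^ card U" if "U \<subseteq> T" "T \<subseteq> S" for T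
  proof -
    have "card U \<le> card T"
      using that assms by (auto intro: card_mono finite_subset)
    then show ?thesis
      by (simp flip: power_add neg_one_power_add_eq_neg_one_power_diff)
  qed
  then have "(\<Sum>T | U \<subseteq> T \<and> T \<subseteq> S. (-1::'b) ^ (card T - card U))
      = (\<Sum>T | U \<subseteq> T \<and> T \<subseteq> S. (-1) ^ card T) * (-1) ^ card U"
    by (simp add: sum_distrib_right)
  then show ?thesis
    using assms by (simp add: sum_neg_one_power_card_between flip: power_add)
qed

lemma sum_neg_one_power_upper_minus_card:
  assumes "finite S"
  shows "(\<Sum>T | U \<subseteq> T \<and> T \<subseteq> S. (-1::'b::ring_1) ^ (card S - card T)) = (if U = S then 1 else 0)"
proof -
  have "(-1::'b) ^ (card S - card T) = (-1) ^ card S * (-1) ^ card T" if "T \<subseteq> S" for T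
  proof -
    have "card T \<le> card S"
      using that assms by (auto intro: card_mono)
    then show ?thesis
      by (simp flip: power_add neg_one_power_add_eq_neg_one_power_diff)
  qed
  then have "(\<Sum>T | U \<subseteq> T \<and> T \<subseteq> S. (-1::'b) ^ (card S - card T))
      = (-1) ^ card S * (\<Sum>T | U \<subseteq> T \<and> T \<subseteq> S. (-1) ^ card T)"
    by (simp add: sum_distrib_left)
  then show ?thesis
    using assms by (simp add: sum_neg_one_power_card_between flip: power_add)
qed

lemma finite_Ptimes: "finite I \<Longrightarrow> finite (Ptimes I)"
  by (simp add: Ptimes_def)

lemma neg_one_power_card_Ptimes:
  assumes "finite I" "J \<in> Ptimes I"
  shows "(-1::'b::ring_1) ^ (card I - 1 - card J) = - ((-1) ^ (card I - card J))"
proof -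
  have "card J < card I"
    using assms unfolding Ptimes_def by (intro psubset_card_mono) auto
  then have "card I - card J = Suc (card I - 1 - card J)"
    by simp
  then show ?thesis
    by simp
qed

lemma sum_neg_one_power_Ptimes_supsets:
  assumes "finite I" "U \<subseteq> I"
  shows "(\<Sum>J | J \<in> Ptimes I \<and> U \<subseteq> J. (-1::'b::ring_1) ^ (card I - 1 - card J))
       = (if U = I then 0 else 1)"
proof -
  have supsets: "{J. J \<in> Ptimes I \<and> U \<subseteq> J} = {J. U \<subseteq> J \<and> J \<subseteq> I} - {I}"
    by (auto simp: Ptimes_def)
  have "(\<Sum>J | J \<in> Ptimes I \<and> U \<subseteq> J. (-1::'b) ^ (card I - 1 - card J))
      = (\<Sum>J | J \<in> Ptimes I \<and> U \<subseteq> J. - ((-1) ^ (card I - card J)))"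
    using neg_one_power_card_Ptimes[where 'b='b, OF assms(1)] by (intro sum.cong) auto
  also have "\<dots> = - (\<Sum>J\<in>{J. U \<subseteq> J \<and> J \<subseteq> I} - {I}. (-1) ^ (card I - card J))"
    by (simp add: sum_negf supsets)
  also have "\<dots> = 1 - (\<Sum>J | U \<subseteq> J \<and> J \<subseteq> I. (-1) ^ (card I - card J))"
    using assms by (subst sum_diff1) (auto intro: finite_subset[of _ "Pow I"])
  finally show ?thesis
    using assms by (simp add: sum_neg_one_power_upper_minus_card)
qed

lemma sum_apply: "(\<Sum>x\<in>S. f x) y = (\<Sum>x\<in>S. f x y)"
  by (induction S rule: infinite_finite_induct) auto

lemma smult_sum_right: "smult c (\<Sum>x\<in>S. f x) = (\<Sum>x\<in>S. smult c (f x))"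
  by (auto simp: smult_def sum_apply sum_distrib_left)

lemma smult_sum_left: "smult (\<Sum>x\<in>S. c x) f = (\<Sum>x\<in>S. smult (c x) f)"
  by (auto simp: smult_def sum_apply sum_distrib_right)

lemma uminus_smult: "- smult c f = smult (- c) f"
  by (simp add: smult_def fun_eq_iff)

lemma sum_smult_gen_apply:
  assumes "finite S"
  shows "(\<Sum>J\<in>S. smult (c J) (gen J)) X = (if X \<in> S then c X else 0)"
proof -
  have "(\<Sum>J\<in>S. smult (c J) (gen J)) X = (\<Sum>J\<in>S. if X = J then c J else 0)"
    unfolding sum_apply by (rule sum.cong[OF refl]) (auto simp: smult_def gen_def)
  then show ?thesis
    using assms by simp
qed

definition mobius_gen :: "'i set \<Rightarrow> ('i set \<Rightarrow> int)" where
  "mobius_gen K = (\<Sum>J\<in>Pow K. smult ((-1) ^ (card K - card J)) (gen J))"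

lemma mobius_gen_apply:
  assumes "finite K"
  shows "mobius_gen K X = (if X \<subseteq> K then (-1) ^ (card K - card X) else 0)"
  using assms by (simp add: mobius_gen_def sum_smult_gen_apply)

lemma sum_mobius_gen_Pow:
  assumes "finite J"
  shows "(\<Sum>K\<in>Pow J. mobius_gen K) = gen J"
proof
  fix X
  have "(\<Sum>K\<in>Pow J. mobius_gen K) X = (\<Sum>K\<in>Pow J. if X \<subseteq> K then (-1) ^ (card K - card X) else 0)"
    using assms by (simp add: sum_apply mobius_gen_apply finite_subset)
  also have "\<dots> = (\<Sum>K | X \<subseteq> K \<and> K \<subseteq> J. (-1) ^ (card K - card X))"
    using assms by (simp add: sum.inter_filter[symmetric] Collect_conj_eq Int_commute Pow_def)
  also have "\<dots> = gen J X"
    using assms by (simp add: sum_neg_one_power_card_minus_lower gen_def)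
  finally show "(\<Sum>K\<in>Pow J. mobius_gen K) X = gen J X" .
qed

lemma sum_mobius_gen_Ptimes:
  assumes "finite I"
  shows "(\<Sum>K\<in>Ptimes I. mobius_gen K) = (\<Sum>J\<in>Ptimes I. smult ((-1) ^ (card I - 1 - card J)) (gen J))"
proof -
  have "(\<Sum>K\<in>Ptimes I. mobius_gen K) = gen I - mobius_gen I"
    using assms by (simp add: Ptimes_def sum_diff1 sum_mobius_gen_Pow)
  also have "mobius_gen I = gen I + (\<Sum>J\<in>Ptimes I. smult ((-1) ^ (card I - card J)) (gen J))"
    using assms unfolding mobius_gen_def Ptimes_def by (subst sum.remove[of _ I]) (auto simp: smult_def)
  also have "gen I - (gen I + (\<Sum>J\<in>Ptimes I. smult ((-1) ^ (card I - card J)) (gen J)))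
      = (\<Sum>J\<in>Ptimes I. smult (- ((-1) ^ (card I - card J))) (gen J))"
    by (simp add: uminus_smult flip: sum_negf)
  also have "\<dots> = (\<Sum>J\<in>Ptimes I. smult ((-1) ^ (card I - 1 - card J)) (gen J))"
    using neg_one_power_card_Ptimes[where 'b=int, OF assms] by (intro sum.cong) auto
  finally show ?thesis .
qed

lemma tensor_sum_PiE:
  assumes "finite A" "finite S"
  shows "tensor A I (\<lambda>a. \<Sum>j\<in>S. f a j) = (\<Sum>k\<in>A \<rightarrow>\<^sub>E S. tensor A I (\<lambda>a. f a (k a)))"
proof
  fix m
  show "tensor A I (\<lambda>a. \<Sum>j\<in>S. f a j) m = (\<Sum>k\<in>A \<rightarrow>\<^sub>E S. tensor A I (\<lambda>a. f a (k a))) m"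
    using assms by (simp add: tensor_def sum_apply prod_sum_PiE)
qed

lemma PiE_Pow_Ptimes:
  assumes "J \<in> Ptimes I"
  shows "A \<rightarrow>\<^sub>E Pow J = {k \<in> A \<rightarrow>\<^sub>E Ptimes I. (\<Union>a\<in>A. k a) \<subseteq> J}"
proof (intro set_eqI iffI)
  fix k assume "k \<in> A \<rightarrow>\<^sub>E Pow J"
  with assms show "k \<in> {k \<in> A \<rightarrow>\<^sub>E Ptimes I. (\<Union>a\<in>A. k a) \<subseteq> J}"
    unfolding Ptimes_def PiE_iff by blast
next
  fix k assume "k \<in> {k \<in> A \<rightarrow>\<^sub>E Ptimes I. (\<Union>a\<in>A. k a) \<subseteq> J}"
  then show "k \<in> A \<rightarrow>\<^sub>E Pow J"
    unfolding PiE_iff by blast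
qed

lemma tensor_sum_smult_gen:
  assumes "finite A" "finite I"
  shows "tensor A I (\<lambda>a. \<Sum>J\<in>Ptimes I. smult ((-1) ^ (card I - 1 - card J)) (gen J))
       = (\<Sum>k\<in>A \<rightarrow>\<^sub>E Ptimes I. tensor A I (\<lambda>a. mobius_gen (k a)))"
  unfolding sum_mobius_gen_Ptimes[OF assms(2), symmetric]
  using assms by (intro tensor_sum_PiE finite_Ptimes)

lemma sum_smult_tensor_gen:
  fixes A :: "'a set" and I :: "'i set"
  assumes "finite A" "finite I"
  shows "(\<Sum>J\<in>Ptimes I. smult ((-1) ^ (card I - 1 - card J)) (tensor A I (\<lambda>a. gen J)))
       = (\<Sum>k | k \<in> A \<rightarrow>\<^sub>E Ptimes I \<and> (\<Union>a\<in>A. k a) \<noteq> I. tensor A I (\<lambda>a. mobius_gen (k a)))"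
proof -
  define c where "c J = (-1::int) ^ (card I - 1 - card J)" for J :: "'i set"
  define T where "T k = tensor A I (\<lambda>a. mobius_gen (k a))" for k
  let ?P = "A \<rightarrow>\<^sub>E Ptimes I"
  have fin: "finite (Ptimes I)" "finite ?P"
    using assms by (simp_all add: finite_Ptimes finite_PiE)
  have tensor_gen: "tensor A I (\<lambda>a. gen J) = (\<Sum>k | k \<in> ?P \<and> (\<Union>a\<in>A. k a) \<subseteq> J. T k)"
    if "J \<in> Ptimes I" for J
  proof -
    have "finite J"
      using that assms by (auto simp: Ptimes_def intro: finite_subset)
    then have "tensor A I (\<lambda>a. gen J) = tensor A I (\<lambda>a. \<Sum>K\<in>Pow J. mobius_gen K)"
      by (simp add: sum_mobius_gen_Pow)
    also have "\<dots> = (\<Sum>k\<in>A \<rightarrow>\<^sub>E Pow J. T k)"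
      using assms \<open>finite J\<close> by (simp add: tensor_sum_PiE T_def)
    finally show ?thesis
      using that by (simp add: PiE_Pow_Ptimes)
  qed
  have "(\<Sum>J\<in>Ptimes I. smult (c J) (tensor A I (\<lambda>a. gen J)))
      = (\<Sum>J\<in>Ptimes I. \<Sum>k | k \<in> ?P \<and> (\<Union>a\<in>A. k a) \<subseteq> J. smult (c J) (T k))"
    by (simp add: tensor_gen smult_sum_right)
  also have "\<dots> = (\<Sum>k\<in>?P. \<Sum>J | J \<in> Ptimes I \<and> (\<Union>a\<in>A. k a) \<subseteq> J. smult (c J) (T k))"
    using fin by (rule sum.swap_restrict)
  also have "\<dots> = (\<Sum>k\<in>?P. if (\<Union>a\<in>A. k a) \<noteq> I then T k else 0)"
  proof (rule sum.cong[OF refl])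
    fix k assume "k \<in> ?P"
    then have "(\<Union>a\<in>A. k a) \<subseteq> I"
      by (auto simp: Ptimes_def)
    then have coeff: "(\<Sum>J | J \<in> Ptimes I \<and> (\<Union>a\<in>A. k a) \<subseteq> J. c J) = (if (\<Union>a\<in>A. k a) = I then 0 else 1)"
      unfolding c_def using assms(2) by (rule sum_neg_one_power_Ptimes_supsets[rotated])
    have "(\<Sum>J | J \<in> Ptimes I \<and> (\<Union>a\<in>A. k a) \<subseteq> J. smult (c J) (T k))
        = smult (\<Sum>J | J \<in> Ptimes I \<and> (\<Union>a\<in>A. k a) \<subseteq> J. c J) (T k)"
      by (rule smult_sum_left[symmetric])
    also have "\<dots> = (if (\<Union>a\<in>A. k a) \<noteq> I then T k else 0)"
      unfolding coeff by (auto simp: smult_def zero_fun_def)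
    finally show "(\<Sum>J | J \<in> Ptimes I \<and> (\<Union>a\<in>A. k a) \<subseteq> J. smult (c J) (T k))
        = (if (\<Union>a\<in>A. k a) \<noteq> I then T k else 0)" .
  qed
  also have "\<dots> = (\<Sum>k | k \<in> ?P \<and> (\<Union>a\<in>A. k a) \<noteq> I. T k)"
    using fin by (simp add: sum.inter_filter)
  finally show ?thesis
    unfolding c_def T_def .
qed

theorem lemma15p2:
  fixes A :: "'a set" and I :: "'i set"
  assumes "finite A" and "finite I"
  shows "tensor A I (\<lambda>a. \<Sum>J\<in>Ptimes I. smult ((-1) ^ (card I - 1 - card J)) (gen J))
           - (\<Sum>J\<in>Ptimes I. smult ((-1) ^ (card I - 1 - card J)) (tensor A I (\<lambda>a. gen J)))
         = (\<Sum>k\<in>Rprime A I. tensor A I (\<lambda>a. \<Sum>J\<in>Pow (k a). smult ((-1) ^ (card (k a) - card J)) (gen J)))"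
proof -
  let ?P = "A \<rightarrow>\<^sub>E Ptimes I"
  have "Rprime A I = ?P - {k \<in> ?P. (\<Union>a\<in>A. k a) \<noteq> I}"
    by (auto simp: Rprime_def)
  then have "(\<Sum>k\<in>Rprime A I. tensor A I (\<lambda>a. mobius_gen (k a)))
      = (\<Sum>k\<in>?P. tensor A I (\<lambda>a. mobius_gen (k a)))
        - (\<Sum>k | k \<in> ?P \<and> (\<Union>a\<in>A. k a) \<noteq> I. tensor A I (\<lambda>a. mobius_gen (k a)))"
    using assms by (simp add: sum_diff finite_PiE finite_Ptimes)
  then show ?thesis
    unfolding tensor_sum_smult_gen[OF assms] sum_smult_tensor_gen[OF assms] mobius_gen_def[symmetric]
    by (rule sym)
qed

end
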